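(* For integers $1\le k<d$, the truncated binomial $P_{k;d}(x)=\sum_{j=0}^{k}\binom{d}{j}x^j$ has no multiple roots. *)

theory Defs
  imports "HOL-Computational_Algebra.Polynomial"
begin

definition trunc_binom :: "nat \<Rightarrow> nat \<Rightarrow> complex poly" where
  "trunc_binom k d = (\<Sum>j\<le>k. monom (of_nat (d choose j)) j)"

end

theory Submission
  imports Defs
begin

text \<open>Differentiating termwise and using \<open>(j+1) * (d choose j+1) = d * (d-1 choose j)\<close> gives
  \<open>(1 + x) P'(x) = d P(x) - d (d-1 choose k) x^k\<close>, the truncated form of
  \<open>(1 + x) ((1 + x)^d)' = d (1 + x)^d\<close>. At a common root of \<open>P\<close> and \<open>P'\<close> the right-hand side
  forces \<open>x^k = 0\<close>, since \<open>d - 1 \<ge> k\<close>; but \<open>x = 0\<close> is not a root because \<open>P(0) = 1\<close>.\<close>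

lemma trunc_binom_0: "trunc_binom 0 d = 1"
  by (simp add: trunc_binom_def one_poly_def monom_0)

lemma trunc_binom_Suc:
  "trunc_binom (Suc k) d = trunc_binom k d + monom (of_nat (d choose Suc k)) (Suc k)"
  by (simp add: trunc_binom_def)

lemma poly_trunc_binom_0: "poly (trunc_binom k d) 0 = 1"
  by (simp add: trunc_binom_def poly_sum poly_monom zero_power)

lemma Suc_times_binomial_pred: "Suc k * (d choose Suc k) = d * (d - 1 choose k)"
proof (cases d)
  case (Suc n)
  then show ?thesis using Suc_times_binomial[of k n] by (simp only: diff_Suc_1)
qed simp

lemma times_binomial_pred_Pascal:
  "d * (d choose Suc k) = d * (d - 1 choose k) + d * (d - 1 choose Suc k)"
  by (cases d) (simp_all add: distrib_left[symmetric])

lemma pCons_1_1_times_monom: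
  "[:1, 1:] * monom (a :: 'a :: comm_semiring_1) k = monom a k + monom a (Suc k)"
  by (simp add: monom_Suc)

lemma trunc_binom_pderiv:
  "[:1, 1:] * pderiv (trunc_binom k d)
     = smult (of_nat d) (trunc_binom k d) - monom (of_nat (d * (d - 1 choose k))) k"
proof (induction k)
  case 0
  then show ?case by (simp add: trunc_binom_0 monom_0 one_pCons)
next
  case (Suc k)
  define A where "A k = (of_nat (d * (d - 1 choose k)) :: complex)" for k
  have "of_nat (Suc k) * of_nat (d choose Suc k) = A k"
    by (simp only: A_def of_nat_mult[symmetric] Suc_times_binomial_pred)
  then have top_term: "[:1, 1:] * pderiv (monom (of_nat (d choose Suc k)) (Suc k))
      = monom (A k) k + monom (A k) (Suc k)"
    by (simp only: pderiv_monom diff_Suc_1 pCons_1_1_times_monom)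
  have pascal: "of_nat d * of_nat (d choose Suc k) = A k + A (Suc k)"
    by (simp only: A_def of_nat_mult[symmetric] of_nat_add[symmetric] times_binomial_pred_Pascal)
  have "[:1, 1:] * pderiv (trunc_binom (Suc k) d)
      = smult (of_nat d) (trunc_binom k d) + monom (A k) (Suc k)"
    unfolding trunc_binom_Suc pderiv_add distrib_left Suc.IH top_term by (simp add: A_def)
  also have "\<dots> = smult (of_nat d) (trunc_binom (Suc k) d) - monom (A (Suc k)) (Suc k)"
    unfolding trunc_binom_Suc smult_add_right smult_monom pascal add_monom[symmetric] by simp
  finally show ?case by (simp add: A_def)
qed

theorem mainTheorem3:
  fixes k d :: nat
  assumes "1 \<le> k" and "k < d"
  shows "rsquarefree (trunc_binom k d)"
  unfolding rsquarefree_roots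
proof (intro allI notI)
  fix z
  assume root: "poly (trunc_binom k d) z = 0 \<and> poly (pderiv (trunc_binom k d)) z = 0"
  have "poly ([:1, 1:] * pderiv (trunc_binom k d)) z
      = poly (smult (of_nat d) (trunc_binom k d) - monom (of_nat (d * (d - 1 choose k))) k) z"
    by (simp only: trunc_binom_pderiv)
  then have "of_nat (d * (d - 1 choose k)) * z ^ k = 0"
    using root by (simp add: poly_monom)
  moreover have "d * (d - 1 choose k) \<noteq> 0"
    using assms by simp
  ultimately have "z = 0"
    using assms by simp
  then show False
    using root poly_trunc_binom_0 by simp
qed

end
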